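(* Assume that for some $a_1>0$ and a constant $C>0$, with probability tending to one, $\max_{j\in[p]}\|\widehat{\partial_jm}-\partial_jm\|_2^2\le Cn^{-a_1}$, and let $a_2,b>0$. Then: (a) for every node $v\notin\mathcal I^\star$ there is $c>0$ such that $P\big(\hat w_v\ge c\, n^{\min(a_1,a_2)b}\big)\to1$; (b) for every node $v\in\mathcal I^\star$, $\hat w_v=O_P\big(1+n^{(a_2-a_1)b}\big)$.
   Context: A known rooted tree $\mathcal T$ with $T$ nodes has exactly $p$ leaves, identified with the coordinates $1,\dots,p$ of $X\in\mathbb R^p$, where $Y=m(X)+\varepsilon$ for a differentiable regression function $m$. For a node $v$, $\mathrm{le}(v)$ denotes the set of leaves that are equal to $v$ or are descendants of $v$; $\mathrm{sib}(v)$ denotes the set of nodes $u\neq v$ having the same parent as $v$ (empty for the root). Derivatives and norms. $\partial_j m$ is the partial derivative of $m$ w.r.t. the $j$-th coordinate of $X$ ($j=1,\dots,p$), and $\|f\|_2$ is the $L^2(P_X)$ norm; statements "$\partial_jm=\partial_km$", "$\partial_jm\neq0$" are meant as elements of $L^2(P_X)$. $\widehat{\partial_jm}$ are (data-dependent) pilot estimators of $\partial_jm$. Target aggregation set. $\mathcal I^\star$ is the set of nodes $v$ such that: (i) $\partial_jm\neq0$ for all $j\in\mathrm{le}(v)$; (ii) $\partial_jm=\partial_km$ for all $j,k\in\mathrm{le}(v)$; (iii) there exist $s\in\bigcup_{u\in\mathrm{sib}(v)}\mathrm{le}(u)$ and $j\in\mathrm{le}(v)$ with $\partial_sm\neq\partial_jm$.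 Adaptive weights. For each node $v$ set $C_{v,1}=\binom{|\mathrm{le}(v)|}{2}^{-1}\sum_{\{j,k\}\subseteq\mathrm{le}(v),\,j\ne k}\|\widehat{\partial_jm}-\widehat{\partial_km}\|_2^2$ (and $C_{v,1}=0$ if $|\mathrm{le}(v)|=1$), $C_{v,2}=|\mathrm{le}(v)|^{-1}\sum_{j\in\mathrm{le}(v)}\|\widehat{\partial_jm}\|_2^2$, $C_{v,3}=\big(|S_v|\,|\mathrm{le}(v)|\big)^{-1}\sum_{j\in\mathrm{le}(v)}\sum_{l\in S_v}\|\widehat{\partial_jm}-\widehat{\partial_lm}\|_2^2$ with $S_v=\bigcup_{u\in\mathrm{sib}(v)}\mathrm{le}(u)$ (and $C_{v,3}=0$ if $S_v=\emptyset$), and $\hat w_v=(n^{a_2}C_{v,1})^b+C_{v,2}^{-b}+C_{v,3}^{-b}$ (with $0^{-b}=+\infty$). *)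

theory Defs
  imports "HOL-Probability.Probability"
begin

definition par_rel :: "'v set \<Rightarrow> ('v \<Rightarrow> 'v option) \<Rightarrow> ('v \<times> 'v) set" where
  "par_rel V par = {(x, y). x \<in> V \<and> y \<in> V \<and> par x = Some y}"

definition rooted_tree :: "'v set \<Rightarrow> ('v \<Rightarrow> 'v option) \<Rightarrow> 'v \<Rightarrow> bool" where
  "rooted_tree V par r \<longleftrightarrow> finite V \<and> r \<in> V \<and> par r = None \<and>
     (\<forall>v\<in>V - {r}. \<exists>u\<in>V. par v = Some u) \<and>
     (\<forall>v\<in>V. (v, r) \<in> (par_rel V par)\<^sup>*)"

definition tree_leaves :: "'v set \<Rightarrow> ('v \<Rightarrow> 'v option) \<Rightarrow> 'v set" where
  "tree_leaves V par = {v \<in> V. \<not> (\<exists>u\<in>V. par u = Some v)}"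

text \<open>le(v): leaves (identified with coordinates via lf) equal to v or descendants of v.\<close>
definition le_set :: "'v set \<Rightarrow> ('v \<Rightarrow> 'v option) \<Rightarrow> ('n \<Rightarrow> 'v) \<Rightarrow> 'v \<Rightarrow> 'n set" where
  "le_set V par lf v = {j. lf j = v \<or> (lf j, v) \<in> (par_rel V par)\<^sup>+}"

definition sib_set :: "'v set \<Rightarrow> ('v \<Rightarrow> 'v option) \<Rightarrow> 'v \<Rightarrow> 'v set" where
  "sib_set V par v = {u \<in> V. u \<noteq> v \<and> par v \<noteq> None \<and> par u = par v}"

definition S_set :: "'v set \<Rightarrow> ('v \<Rightarrow> 'v option) \<Rightarrow> ('n \<Rightarrow> 'v) \<Rightarrow> 'v \<Rightarrow> 'n set" where
  "S_set V par lf v = (\<Union>u\<in>sib_set V par v. le_set V par lf u)"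

definition L2sq :: "'x measure \<Rightarrow> ('x \<Rightarrow> real) \<Rightarrow> real" where
  "L2sq PX f = (\<integral>x. (f x)\<^sup>2 \<partial>PX)"

definition sq_int :: "'x measure \<Rightarrow> ('x \<Rightarrow> real) \<Rightarrow> bool" where
  "sq_int PX f \<longleftrightarrow> f \<in> borel_measurable PX \<and> integrable PX (\<lambda>x. (f x)\<^sup>2)"

definition pderiv_j :: "(real ^ 'n \<Rightarrow> real) \<Rightarrow> 'n \<Rightarrow> real ^ 'n \<Rightarrow> real" where
  "pderiv_j m j x = frechet_derivative m (at x) (axis j 1)"

definition Istar :: "'v set \<Rightarrow> ('v \<Rightarrow> 'v option) \<Rightarrow> ('n \<Rightarrow> 'v) \<Rightarrow> (real ^ 'n) measure
   \<Rightarrow> ('n \<Rightarrow> real ^ 'n \<Rightarrow> real) \<Rightarrow> 'v set" where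
  "Istar V par lf PX d = {v \<in> V.
     (\<forall>j\<in>le_set V par lf v. L2sq PX (d j) \<noteq> 0) \<and>
     (\<forall>j\<in>le_set V par lf v. \<forall>k\<in>le_set V par lf v. L2sq PX (\<lambda>x. d j x - d k x) = 0) \<and>
     (\<exists>s\<in>S_set V par lf v. \<exists>j\<in>le_set V par lf v. L2sq PX (\<lambda>x. d s x - d j x) \<noteq> 0)}"

text \<open>Here dh j is the (realised) pilot estimator of the j-th partial derivative.\<close>
definition C1 :: "'v set \<Rightarrow> ('v \<Rightarrow> 'v option) \<Rightarrow> ('n \<Rightarrow> 'v) \<Rightarrow> 'x measure
   \<Rightarrow> ('n \<Rightarrow> 'x \<Rightarrow> real) \<Rightarrow> 'v \<Rightarrow> real" where
  "C1 V par lf PX dh v = (let L = le_set V par lf v in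
     if card L = 1 then 0 else
     inverse (real (card L choose 2)) *
       ((1/2) * (\<Sum>j\<in>L. \<Sum>k\<in>L - {j}. L2sq PX (\<lambda>x. dh j x - dh k x))))"

definition C2 :: "'v set \<Rightarrow> ('v \<Rightarrow> 'v option) \<Rightarrow> ('n \<Rightarrow> 'v) \<Rightarrow> 'x measure
   \<Rightarrow> ('n \<Rightarrow> 'x \<Rightarrow> real) \<Rightarrow> 'v \<Rightarrow> real" where
  "C2 V par lf PX dh v = (let L = le_set V par lf v in
     inverse (real (card L)) * (\<Sum>j\<in>L. L2sq PX (dh j)))"

definition C3 :: "'v set \<Rightarrow> ('v \<Rightarrow> 'v option) \<Rightarrow> ('n \<Rightarrow> 'v) \<Rightarrow> 'x measure
   \<Rightarrow> ('n \<Rightarrow> 'x \<Rightarrow> real) \<Rightarrow> 'v \<Rightarrow> real" where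
  "C3 V par lf PX dh v = (let L = le_set V par lf v; S = S_set V par lf v in
     if S = {} then 0 else
     inverse (real (card S) * real (card L)) *
       (\<Sum>j\<in>L. \<Sum>l\<in>S. L2sq PX (\<lambda>x. dh j x - dh l x)))"

definition neg_pow :: "real \<Rightarrow> real \<Rightarrow> ereal" where
  "neg_pow c b = (if c = 0 then \<infinity> else ereal (c powr (- b)))"

definition what :: "'v set \<Rightarrow> ('v \<Rightarrow> 'v option) \<Rightarrow> ('n \<Rightarrow> 'v) \<Rightarrow> 'x measure
   \<Rightarrow> real \<Rightarrow> real \<Rightarrow> nat \<Rightarrow> ('n \<Rightarrow> 'x \<Rightarrow> real) \<Rightarrow> 'v \<Rightarrow> ereal" where
  "what V par lf PX a2 b n dh v =
     ereal ((real n powr a2 * C1 V par lf PX dh v) powr b)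
     + neg_pow (C2 V par lf PX dh v) b + neg_pow (C3 V par lf PX dh v) b"

end

theory Submission
  imports Defs
begin

text \<open>Let \<open>\<epsilon>\<^sub>n = C n powr -a\<^sub>1\<close>. On the event that every pilot estimator is \<open>\<epsilon>\<^sub>n\<close>-close
  to the true partial derivative in squared \<open>L\<^sup>2\<close> norm, which has probability tending to one,
  the relaxed triangle inequality \<open>\<parallel>f - h\<parallel>\<^sup>2 \<le> 2\<parallel>f - g\<parallel>\<^sup>2 + 2\<parallel>g - h\<parallel>\<^sup>2\<close> shows that every
  squared distance between estimators agrees with the corresponding distance between true
  derivatives up to a factor 4 and an additive \<open>6\<epsilon>\<^sub>n\<close>. So for a node outside \<open>I\<^sup>*\<close> either two
  of its leaves have different derivatives, \<open>C1\<close> stays bounded below and the first term of the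
  weight grows like \<open>n powr (a\<^sub>2 b)\<close>, or \<open>C2\<close> or \<open>C3\<close> is \<open>O(\<epsilon>\<^sub>n)\<close> and its inverse power grows
  like \<open>n powr (a\<^sub>1 b)\<close>. For a node in \<open>I\<^sup>*\<close>, \<open>C1 = O(\<epsilon>\<^sub>n)\<close> while \<open>C2\<close> and \<open>C3\<close> stay bounded
  below.\<close>

lemma L2sq_nonneg: "0 \<le> L2sq PX f"
  unfolding L2sq_def by simp

lemma L2sq_pos_iff: "0 < L2sq PX f \<longleftrightarrow> L2sq PX f \<noteq> 0"
  using L2sq_nonneg[of PX f] by linarith

lemma L2sq_commute: "L2sq PX (\<lambda>x. f x - g x) = L2sq PX (\<lambda>x. g x - f x)"
  unfolding L2sq_def by (simp add: power2_commute)

lemma sq_int_zero: "sq_int PX (\<lambda>x. 0)"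
  unfolding sq_int_def by simp

lemma square_diff_le:
  fixes a b c :: real
  shows "(a - c)\<^sup>2 \<le> 2 * (a - b)\<^sup>2 + 2 * (b - c)\<^sup>2"
proof -
  have "0 \<le> (a - 2 * b + c)\<^sup>2" by simp
  then show ?thesis by (simp add: power2_eq_square algebra_simps)
qed

lemma sq_int_diff:
  assumes "sq_int PX f" "sq_int PX g"
  shows "sq_int PX (\<lambda>x. f x - g x)"
proof -
  have meas: "f \<in> borel_measurable PX" "g \<in> borel_measurable PX"
    and int: "integrable PX (\<lambda>x. (f x)\<^sup>2)" "integrable PX (\<lambda>x. (g x)\<^sup>2)"
    using assms unfolding sq_int_def by auto
  have "integrable PX (\<lambda>x. (f x - g x)\<^sup>2)"
  proof (rule Bochner_Integration.integrable_bound)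
    show "integrable PX (\<lambda>x. 2 * (f x)\<^sup>2 + 2 * (g x)\<^sup>2)"
      using int by auto
    show "AE x in PX. norm ((f x - g x)\<^sup>2) \<le> norm (2 * (f x)\<^sup>2 + 2 * (g x)\<^sup>2)"
    proof (rule AE_I2)
      fix x
      show "norm ((f x - g x)\<^sup>2) \<le> norm (2 * (f x)\<^sup>2 + 2 * (g x)\<^sup>2)"
        using square_diff_le[where a = "f x" and b = 0 and c = "g x"] by simp
    qed
  qed (use meas in measurable)
  then show ?thesis
    using meas unfolding sq_int_def by auto
qed

lemma L2sq_triangle:
  assumes "sq_int PX f" "sq_int PX g" "sq_int PX h"
  shows "L2sq PX (\<lambda>x. f x - h x) \<le> 2 * L2sq PX (\<lambda>x. f x - g x) + 2 * L2sq PX (\<lambda>x. g x - h x)"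
proof -
  have int: "integrable PX (\<lambda>x. (u x - w x)\<^sup>2)"
    if "sq_int PX u" "sq_int PX w" for u w
    using sq_int_diff[OF that] unfolding sq_int_def by auto
  have "L2sq PX (\<lambda>x. f x - h x) \<le> (\<integral>x. 2 * (f x - g x)\<^sup>2 + 2 * (g x - h x)\<^sup>2 \<partial>PX)"
    unfolding L2sq_def using assms int[of f g] int[of g h]
    by (intro integral_mono int square_diff_le) auto
  also have "\<dots> = 2 * L2sq PX (\<lambda>x. f x - g x) + 2 * L2sq PX (\<lambda>x. g x - h x)"
    unfolding L2sq_def using assms by (simp add: int)
  finally show ?thesis .
qed

lemma L2sq_diff_perturb:
  assumes "sq_int PX f" "sq_int PX g" "sq_int PX f'" "sq_int PX g'"
    and "L2sq PX (\<lambda>x. f' x - f x) \<le> \<epsilon>" "L2sq PX (\<lambda>x. g' x - g x) \<le> \<epsilon>"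
  shows "L2sq PX (\<lambda>x. f' x - g' x) \<le> 4 * L2sq PX (\<lambda>x. f x - g x) + 6 * \<epsilon>"
  using L2sq_triangle[of PX f' f g'] L2sq_triangle[of PX f g g'] L2sq_commute[of PX g' g] assms
  by linarith

definition L2_close :: "'x measure \<Rightarrow> real \<Rightarrow> ('n \<Rightarrow> 'x \<Rightarrow> real) \<Rightarrow> ('n \<Rightarrow> 'x \<Rightarrow> real) \<Rightarrow> bool" where
  "L2_close PX \<epsilon> f g \<longleftrightarrow>
     (\<forall>j. sq_int PX (f j) \<and> sq_int PX (g j) \<and> L2sq PX (\<lambda>x. f j x - g j x) \<le> \<epsilon>)"

lemma L2_close_commute: "L2_close PX \<epsilon> f g \<longleftrightarrow> L2_close PX \<epsilon> g f"
  unfolding L2_close_def using L2sq_commute by metis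

lemma L2_close_nonneg: "L2_close PX \<epsilon> f g \<Longrightarrow> 0 \<le> \<epsilon>"
  unfolding L2_close_def using L2sq_nonneg order_trans by blast

lemma L2_close_diff_le:
  assumes "L2_close PX \<epsilon> f g"
  shows "L2sq PX (\<lambda>x. f j x - f k x) \<le> 4 * L2sq PX (\<lambda>x. g j x - g k x) + 6 * \<epsilon>"
  using assms unfolding L2_close_def by (intro L2sq_diff_perturb) auto

lemma L2_close_norm_le:
  assumes "L2_close PX \<epsilon> f g"
  shows "L2sq PX (f j) \<le> 4 * L2sq PX (g j) + 6 * \<epsilon>"
  using L2sq_diff_perturb[of PX "g j" "\<lambda>x. 0" "f j" "\<lambda>x. 0" \<epsilon>] assms L2_close_nonneg[OF assms]
  unfolding L2_close_def by (simp add: sq_int_zero L2sq_def)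

lemma C1_nonneg: "0 \<le> C1 V par lf PX f v"
  unfolding C1_def Let_def by (auto intro!: sum_nonneg mult_nonneg_nonneg simp: L2sq_nonneg)

lemma C2_nonneg: "0 \<le> C2 V par lf PX f v"
  unfolding C2_def Let_def by (auto intro!: sum_nonneg mult_nonneg_nonneg simp: L2sq_nonneg)

lemma C3_nonneg: "0 \<le> C3 V par lf PX f v"
  unfolding C3_def Let_def by (auto intro!: sum_nonneg mult_nonneg_nonneg simp: L2sq_nonneg)

lemma C1_le:
  fixes lf :: "'n::finite \<Rightarrow> 'v"
  assumes "\<And>j k. j \<in> le_set V par lf v \<Longrightarrow> k \<in> le_set V par lf v \<Longrightarrow>
             L2sq PX (\<lambda>x. f j x - f k x) \<le> B"
    and "0 \<le> B"
  shows "C1 V par lf PX f v \<le> B"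
proof -
  let ?L = "le_set V par lf v"
  define l where "l = card ?L"
  have pairs: "2 * (l choose 2) = l * (l - 1)"
    using times_binomial_minus1_eq[of 2 l] by simp
  have "(\<Sum>j\<in>?L. \<Sum>k\<in>?L - {j}. L2sq PX (\<lambda>x. f j x - f k x)) \<le> (\<Sum>j\<in>?L. \<Sum>k\<in>?L - {j}. B)"
    using assms(1) by (intro sum_mono) auto
  also have "\<dots> = real l * real (l - 1) * B"
    unfolding l_def by (simp add: card_Diff_singleton)
  also have "\<dots> = 2 * real (l choose 2) * B"
    by (metis pairs of_nat_mult of_nat_numeral)
  finally have sum: "(\<Sum>j\<in>?L. \<Sum>k\<in>?L - {j}. L2sq PX (\<lambda>x. f j x - f k x))
                      \<le> 2 * real (l choose 2) * B" .
  show ?thesis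
  proof (cases "l choose 2 = 0")
    case False
    then have "0 < real (l choose 2)" by simp
    with sum show ?thesis
      unfolding C1_def Let_def l_def[symmetric] by (simp add: field_simps)
  qed (simp add: C1_def Let_def l_def[symmetric] binomial_eq_0 assms(2))
qed

lemma C1_ge:
  fixes lf :: "'n::finite \<Rightarrow> 'v"
  assumes "j \<in> le_set V par lf v" "k \<in> le_set V par lf v" "j \<noteq> k"
  shows "L2sq PX (\<lambda>x. f j x - f k x) / (2 * real (card (le_set V par lf v) choose 2))
           \<le> C1 V par lf PX f v"
proof -
  let ?L = "le_set V par lf v"
  have "card ?L \<noteq> 1"
    using assms by (metis card_1_singletonE singletonD)
  have "L2sq PX (\<lambda>x. f j x - f k x) \<le> (\<Sum>k\<in>?L - {j}. L2sq PX (\<lambda>x. f j x - f k x))"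
    using assms by (intro member_le_sum) (auto simp: L2sq_nonneg)
  also have "\<dots> \<le> (\<Sum>j\<in>?L. \<Sum>k\<in>?L - {j}. L2sq PX (\<lambda>x. f j x - f k x))"
    using assms(1)
    by (rule member_le_sum[where f = "\<lambda>j. \<Sum>k\<in>?L - {j}. L2sq PX (\<lambda>x. f j x - f k x)"])
      (auto intro!: sum_nonneg simp: L2sq_nonneg)
  finally show ?thesis
    using \<open>card ?L \<noteq> 1\<close> unfolding C1_def Let_def
    by (auto simp: field_simps divide_right_mono)
qed

lemma C2_le:
  fixes lf :: "'n::finite \<Rightarrow> 'v"
  assumes "\<And>j. j \<in> le_set V par lf v \<Longrightarrow> L2sq PX (f j) \<le> B" and "0 \<le> B"
  shows "C2 V par lf PX f v \<le> B"
proof (cases "le_set V par lf v = {}")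
  case False
  let ?L = "le_set V par lf v"
  have "(\<Sum>j\<in>?L. L2sq PX (f j)) \<le> real (card ?L) * B"
    using sum_mono[of ?L "\<lambda>j. L2sq PX (f j)" "\<lambda>_. B"] assms(1) by auto
  moreover have "0 < real (card ?L)"
    using False by (simp add: card_gt_0_iff)
  ultimately show ?thesis
    unfolding C2_def Let_def by (simp add: field_simps)
qed (simp add: C2_def assms(2))

lemma C2_ge:
  fixes lf :: "'n::finite \<Rightarrow> 'v"
  assumes "j \<in> le_set V par lf v"
  shows "L2sq PX (f j) / real (card (le_set V par lf v)) \<le> C2 V par lf PX f v"
  unfolding C2_def Let_def divide_inverse using assms
  by (subst mult.commute) (intro mult_left_mono member_le_sum; simp add: L2sq_nonneg)

lemma C3_le:
  fixes lf :: "'n::finite \<Rightarrow> 'v"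
  assumes "\<And>j l. j \<in> le_set V par lf v \<Longrightarrow> l \<in> S_set V par lf v \<Longrightarrow>
             L2sq PX (\<lambda>x. f j x - f l x) \<le> B"
    and "0 \<le> B"
  shows "C3 V par lf PX f v \<le> B"
proof (cases "le_set V par lf v = {} \<or> S_set V par lf v = {}")
  case False
  let ?L = "le_set V par lf v" and ?S = "S_set V par lf v"
  have "(\<Sum>j\<in>?L. \<Sum>l\<in>?S. L2sq PX (\<lambda>x. f j x - f l x)) \<le> (\<Sum>j\<in>?L. \<Sum>l\<in>?S. B)"
    using assms(1) by (intro sum_mono) auto
  moreover have "0 < real (card ?S) * real (card ?L)"
    using False by (simp add: card_gt_0_iff)
  ultimately show ?thesis
    using assms(2) unfolding C3_def Let_def by (simp add: field_simps)
qed (auto simp: C3_def Let_def assms(2))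

lemma C3_ge:
  fixes lf :: "'n::finite \<Rightarrow> 'v"
  assumes "j \<in> le_set V par lf v" "l \<in> S_set V par lf v"
  shows "L2sq PX (\<lambda>x. f j x - f l x) / (real (card (S_set V par lf v)) * real (card (le_set V par lf v)))
           \<le> C3 V par lf PX f v"
proof -
  let ?L = "le_set V par lf v" and ?S = "S_set V par lf v"
  have "L2sq PX (\<lambda>x. f j x - f l x) \<le> (\<Sum>l\<in>?S. L2sq PX (\<lambda>x. f j x - f l x))"
    using assms by (intro member_le_sum) (auto simp: L2sq_nonneg)
  also have "\<dots> \<le> (\<Sum>j\<in>?L. \<Sum>l\<in>?S. L2sq PX (\<lambda>x. f j x - f l x))"
    using assms(1)
    by (rule member_le_sum[where f = "\<lambda>j. \<Sum>l\<in>?S. L2sq PX (\<lambda>x. f j x - f l x)"])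
      (auto intro!: sum_nonneg simp: L2sq_nonneg)
  finally show ?thesis
    using assms(2) unfolding C3_def Let_def
    by (auto simp: field_simps divide_right_mono)
qed

lemma neg_pow_nonneg: "0 \<le> neg_pow c b"
  unfolding neg_pow_def by simp

lemma neg_pow_ge:
  assumes "0 \<le> c" "c \<le> u" "0 < u" "0 \<le> b"
  shows "ereal (u powr - b) \<le> neg_pow c b"
  using assms powr_mono2'[of "- b" c u] unfolding neg_pow_def by auto

lemma neg_pow_le:
  assumes "\<gamma> \<le> c" "0 < \<gamma>" "0 \<le> b"
  shows "neg_pow c b \<le> ereal (\<gamma> powr - b)"
  using assms powr_mono2'[of "- b" \<gamma> c] unfolding neg_pow_def by auto

lemma what_ge_C1: "ereal ((real n powr a2 * C1 V par lf PX f v) powr b) \<le> what V par lf PX a2 b n f v"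
  unfolding what_def
  using neg_pow_nonneg[of "C2 V par lf PX f v" b] neg_pow_nonneg[of "C3 V par lf PX f v" b]
  by (simp add: add_increasing2)

lemma what_ge_if_C2_or_C3_le:
  assumes "C2 V par lf PX f v \<le> u \<or> C3 V par lf PX f v \<le> u" "0 < u" "0 \<le> b"
  shows "ereal (u powr - b) \<le> what V par lf PX a2 b n f v"
proof -
  have "neg_pow (C2 V par lf PX f v) b \<le> what V par lf PX a2 b n f v"
    "neg_pow (C3 V par lf PX f v) b \<le> what V par lf PX a2 b n f v"
    unfolding what_def
    using neg_pow_nonneg[of "C2 V par lf PX f v" b] neg_pow_nonneg[of "C3 V par lf PX f v" b]
    by (simp_all add: add_increasing add_increasing2)
  then show ?thesis
    using assms neg_pow_ge[of "C2 V par lf PX f v" u b] neg_pow_ge[of "C3 V par lf PX f v" u b]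
    by (auto simp: C2_nonneg C3_nonneg intro: order_trans)
qed

lemma what_le:
  assumes "C1 V par lf PX f v \<le> u" "\<gamma>2 \<le> C2 V par lf PX f v" "\<gamma>3 \<le> C3 V par lf PX f v"
    and "0 < \<gamma>2" "0 < \<gamma>3" "0 \<le> b"
  shows "what V par lf PX a2 b n f v \<le> ereal ((real n powr a2 * u) powr b + \<gamma>2 powr - b + \<gamma>3 powr - b)"
proof -
  have "(real n powr a2 * C1 V par lf PX f v) powr b \<le> (real n powr a2 * u) powr b"
    using assms(1,6) by (intro powr_mono2 mult_left_mono mult_nonneg_nonneg) (auto simp: C1_nonneg)
  then have "what V par lf PX a2 b n f v
             \<le> ereal ((real n powr a2 * u) powr b) + ereal (\<gamma>2 powr - b) + ereal (\<gamma>3 powr - b)"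
    unfolding what_def using assms(2-6) by (intro add_mono neg_pow_le) auto
  then show ?thesis by simp
qed

lemma measurable_what:
  fixes F :: "'w \<Rightarrow> 'n \<Rightarrow> 'x \<Rightarrow> real"
  assumes "\<And>j k. (\<lambda>\<omega>. L2sq PX (\<lambda>x. F \<omega> j x - F \<omega> k x)) \<in> borel_measurable M"
    and "\<And>j. (\<lambda>\<omega>. L2sq PX (F \<omega> j)) \<in> borel_measurable M"
  shows "(\<lambda>\<omega>. what V par lf PX a2 b n (F \<omega>) v) \<in> borel_measurable M"
proof -
  have "(\<lambda>\<omega>. C1 V par lf PX (F \<omega>) v) \<in> borel_measurable M"
    "(\<lambda>\<omega>. C2 V par lf PX (F \<omega>) v) \<in> borel_measurable M"
    "(\<lambda>\<omega>. C3 V par lf PX (F \<omega>) v) \<in> borel_measurable M"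
    unfolding C1_def C2_def C3_def Let_def using assms by measurable
  moreover have "(\<lambda>\<omega>. neg_pow (g \<omega>) b) \<in> borel_measurable M" if "g \<in> borel_measurable M" for g
    unfolding neg_pow_def using that by measurable
  ultimately show ?thesis
    unfolding what_def by measurable
qed

lemma C1_ge_if_leaves_differ:
  fixes lf :: "'n::finite \<Rightarrow> 'v"
  assumes close: "L2_close PX \<epsilon> f d"
    and jk: "j \<in> le_set V par lf v" "k \<in> le_set V par lf v"
    and pos: "0 < L2sq PX (\<lambda>x. d j x - d k x)"
    and small: "12 * \<epsilon> \<le> L2sq PX (\<lambda>x. d j x - d k x)"
  shows "L2sq PX (\<lambda>x. d j x - d k x) / (16 * real (card (le_set V par lf v) choose 2))
           \<le> C1 V par lf PX f v"
proof -
  have "j \<noteq> k"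
    using pos by (auto simp: L2sq_def)
  have "L2sq PX (\<lambda>x. d j x - d k x) \<le> 4 * L2sq PX (\<lambda>x. f j x - f k x) + 6 * \<epsilon>"
    by (rule L2_close_diff_le[OF close[THEN L2_close_commute[THEN iffD1]]])
  then have "L2sq PX (\<lambda>x. d j x - d k x) / 8 \<le> L2sq PX (\<lambda>x. f j x - f k x)"
    using small by linarith
  then have "L2sq PX (\<lambda>x. d j x - d k x) / 8 / (2 * real (card (le_set V par lf v) choose 2))
             \<le> L2sq PX (\<lambda>x. f j x - f k x) / (2 * real (card (le_set V par lf v) choose 2))"
    by (rule divide_right_mono) simp
  also have "\<dots> \<le> C1 V par lf PX f v"
    by (rule C1_ge[OF jk \<open>j \<noteq> k\<close>])
  finally show ?thesis by simp
qed

lemma C1_le_if_leaves_agree: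
  fixes lf :: "'n::finite \<Rightarrow> 'v"
  assumes close: "L2_close PX \<epsilon> f d"
    and agree: "\<And>j k. j \<in> le_set V par lf v \<Longrightarrow> k \<in> le_set V par lf v \<Longrightarrow>
                  L2sq PX (\<lambda>x. d j x - d k x) = 0"
  shows "C1 V par lf PX f v \<le> 6 * \<epsilon>"
proof (rule C1_le)
  fix j k
  assume "j \<in> le_set V par lf v" "k \<in> le_set V par lf v"
  then show "L2sq PX (\<lambda>x. f j x - f k x) \<le> 6 * \<epsilon>"
    using L2_close_diff_le[OF close, of j k] agree by simp
qed (use L2_close_nonneg[OF close] in simp)

lemma C2_ge_if_nonvanishing:
  fixes lf :: "'n::finite \<Rightarrow> 'v"
  assumes close: "L2_close PX \<epsilon> f d" and j: "j \<in> le_set V par lf v"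
    and small: "12 * \<epsilon> \<le> L2sq PX (d j)"
  shows "L2sq PX (d j) / (8 * real (card (le_set V par lf v))) \<le> C2 V par lf PX f v"
proof -
  have "L2sq PX (d j) \<le> 4 * L2sq PX (f j) + 6 * \<epsilon>"
    by (rule L2_close_norm_le[OF close[THEN L2_close_commute[THEN iffD1]]])
  then have "L2sq PX (d j) / 8 / real (card (le_set V par lf v))
             \<le> L2sq PX (f j) / real (card (le_set V par lf v))"
    using small by (intro divide_right_mono) auto
  also have "\<dots> \<le> C2 V par lf PX f v"
    by (rule C2_ge[OF j])
  finally show ?thesis by simp
qed

lemma C2_le_if_vanishing:
  fixes lf :: "'n::finite \<Rightarrow> 'v"
  assumes close: "L2_close PX \<epsilon> f d"
    and vanish: "\<And>j. j \<in> le_set V par lf v \<Longrightarrow> L2sq PX (d j) = 0"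
  shows "C2 V par lf PX f v \<le> 6 * \<epsilon>"
proof (rule C2_le)
  fix j
  assume "j \<in> le_set V par lf v"
  then show "L2sq PX (f j) \<le> 6 * \<epsilon>"
    using L2_close_norm_le[OF close, of j] vanish by simp
qed (use L2_close_nonneg[OF close] in simp)

lemma C3_ge_if_sibling_differs:
  fixes lf :: "'n::finite \<Rightarrow> 'v"
  assumes close: "L2_close PX \<epsilon> f d"
    and j: "j \<in> le_set V par lf v" and s: "s \<in> S_set V par lf v"
    and small: "12 * \<epsilon> \<le> L2sq PX (\<lambda>x. d j x - d s x)"
  shows "L2sq PX (\<lambda>x. d j x - d s x) / (8 * real (card (S_set V par lf v)) * real (card (le_set V par lf v)))
           \<le> C3 V par lf PX f v"
proof -
  let ?N = "real (card (S_set V par lf v)) * real (card (le_set V par lf v))"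
  have "L2sq PX (\<lambda>x. d j x - d s x) \<le> 4 * L2sq PX (\<lambda>x. f j x - f s x) + 6 * \<epsilon>"
    by (rule L2_close_diff_le[OF close[THEN L2_close_commute[THEN iffD1]]])
  then have "L2sq PX (\<lambda>x. d j x - d s x) / 8 / ?N \<le> L2sq PX (\<lambda>x. f j x - f s x) / ?N"
    using small by (intro divide_right_mono) auto
  also have "\<dots> \<le> C3 V par lf PX f v"
    by (rule C3_ge[OF j s])
  finally show ?thesis by (simp add: mult.assoc)
qed

lemma C3_le_if_siblings_agree:
  fixes lf :: "'n::finite \<Rightarrow> 'v"
  assumes close: "L2_close PX \<epsilon> f d"
    and agree: "\<And>j s. j \<in> le_set V par lf v \<Longrightarrow> s \<in> S_set V par lf v \<Longrightarrow>
                  L2sq PX (\<lambda>x. d j x - d s x) = 0"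
  shows "C3 V par lf PX f v \<le> 6 * \<epsilon>"
proof (rule C3_le)
  fix j s
  assume "j \<in> le_set V par lf v" "s \<in> S_set V par lf v"
  then show "L2sq PX (\<lambda>x. f j x - f s x) \<le> 6 * \<epsilon>"
    using L2_close_diff_le[OF close, of j s] agree by simp
qed (use L2_close_nonneg[OF close] in simp)

lemma not_Istar_cases:
  fixes lf :: "'n::finite \<Rightarrow> 'v"
  assumes v: "v \<in> V - Istar V par lf PX d" and d: "\<And>j. sq_int PX (d j)"
  obtains j k where "j \<in> le_set V par lf v" "k \<in> le_set V par lf v"
      "0 < L2sq PX (\<lambda>x. d j x - d k x)"
    | "\<And>\<epsilon> f. L2_close PX \<epsilon> f d \<Longrightarrow> C2 V par lf PX f v \<le> 6 * \<epsilon> \<or> C3 V par lf PX f v \<le> 6 * \<epsilon>"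
proof (cases "\<forall>j\<in>le_set V par lf v. \<forall>k\<in>le_set V par lf v. L2sq PX (\<lambda>x. d j x - d k x) = 0")
  case False
  then obtain j k where "j \<in> le_set V par lf v" "k \<in> le_set V par lf v"
    "L2sq PX (\<lambda>x. d j x - d k x) \<noteq> 0"
    by blast
  then show ?thesis
    using that(1) by (simp add: L2sq_pos_iff)
next
  case agree: True
  let ?L = "le_set V par lf v" and ?S = "S_set V par lf v"
  have "(\<exists>j\<in>?L. L2sq PX (d j) = 0) \<or> (\<forall>s\<in>?S. \<forall>j\<in>?L. L2sq PX (\<lambda>x. d s x - d j x) = 0)"
    using v agree unfolding Istar_def by auto
  then show ?thesis
  proof
    assume "\<exists>j\<in>?L. L2sq PX (d j) = 0"
    then obtain j0 where j0: "j0 \<in> ?L" "L2sq PX (d j0) = 0" by blast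
    have vanish: "L2sq PX (d j) = 0" if "j \<in> ?L" for j
      using L2sq_triangle[OF d d sq_int_zero, of j j0] agree that j0 L2sq_nonneg[of PX "d j"]
      by simp
    show ?thesis
    proof (rule that(2))
      fix \<epsilon> f
      assume close: "L2_close PX \<epsilon> f d"
      show "C2 V par lf PX f v \<le> 6 * \<epsilon> \<or> C3 V par lf PX f v \<le> 6 * \<epsilon>"
        using C2_le_if_vanishing[where V = V and par = par and lf = lf and v = v, OF close vanish]
        by simp
    qed
  next
    assume "\<forall>s\<in>?S. \<forall>j\<in>?L. L2sq PX (\<lambda>x. d s x - d j x) = 0"
    then have siblings_agree: "L2sq PX (\<lambda>x. d j x - d s x) = 0" if "j \<in> ?L" "s \<in> ?S" for j s
      using that L2sq_commute[of PX "d j" "d s"] by simp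
    show ?thesis
    proof (rule that(2))
      fix \<epsilon> f
      assume close: "L2_close PX \<epsilon> f d"
      show "C2 V par lf PX f v \<le> 6 * \<epsilon> \<or> C3 V par lf PX f v \<le> 6 * \<epsilon>"
        using C3_le_if_siblings_agree[where V = V and par = par and lf = lf and v = v,
            OF close siblings_agree]
        by simp
    qed
  qed
qed

lemma eventually_rate_le:
  fixes a C \<delta> :: real
  assumes "0 < a" "0 < \<delta>"
  shows "\<forall>\<^sub>F n in sequentially. C * real n powr - a \<le> \<delta>"
proof -
  have "(\<lambda>n. C * real n powr - a) \<longlonglongrightarrow> C * 0"
    using assms(1) by (intro tendsto_mult tendsto_const tendsto_neg_powr filterlim_real_sequentially) auto
  then have "\<forall>\<^sub>F n in sequentially. C * real n powr - a < \<delta>"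
    using assms(2) by (intro order_tendstoD(2)) auto
  then show ?thesis
    by (rule eventually_mono) simp
qed

lemma what_ge_if_leaves_differ:
  fixes lf :: "'n::finite \<Rightarrow> 'v"
  assumes jk: "j \<in> le_set V par lf v" "k \<in> le_set V par lf v"
    and pos: "0 < L2sq PX (\<lambda>x. d j x - d k x)" and "0 < a1" "0 \<le> b"
  shows "\<exists>c>0. \<forall>\<^sub>F n in sequentially. \<forall>f. L2_close PX (C * real n powr - a1) f d \<longrightarrow>
           ereal (c * real n powr (a2 * b)) \<le> what V par lf PX a2 b n f v"
proof -
  let ?D = "L2sq PX (\<lambda>x. d j x - d k x)" and ?L = "le_set V par lf v"
  define \<kappa> where "\<kappa> = ?D / (16 * real (card ?L choose 2))"
  have "j \<noteq> k"
    using pos by (auto simp: L2sq_def)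
  then have "2 \<le> card ?L"
    using jk card_mono[of ?L "{j, k}"] by auto
  then have "0 < \<kappa>"
    using pos unfolding \<kappa>_def by simp
  have "0 < ?D / 12"
    using pos by simp
  have "\<forall>\<^sub>F n in sequentially. \<forall>f. L2_close PX (C * real n powr - a1) f d \<longrightarrow>
          ereal (\<kappa> powr b * real n powr (a2 * b)) \<le> what V par lf PX a2 b n f v"
    using eventually_rate_le[OF \<open>0 < a1\<close> \<open>0 < ?D / 12\<close>, of C]
  proof eventually_elim
    case (elim n)
    show ?case
    proof (intro allI impI)
      fix f
      assume "L2_close PX (C * real n powr - a1) f d"
      then have "\<kappa> \<le> C1 V par lf PX f v"
        unfolding \<kappa>_def using elim by (intro C1_ge_if_leaves_differ jk pos) auto
      have "\<kappa> powr b * real n powr (a2 * b) = (real n powr a2 * \<kappa>) powr b"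
        using \<open>0 < \<kappa>\<close> by (simp add: powr_mult powr_powr mult_ac)
      also have "\<dots> \<le> (real n powr a2 * C1 V par lf PX f v) powr b"
        using \<open>0 < \<kappa>\<close> \<open>\<kappa> \<le> C1 V par lf PX f v\<close> \<open>0 \<le> b\<close>
        by (intro powr_mono2 mult_left_mono) auto
      finally show "ereal (\<kappa> powr b * real n powr (a2 * b)) \<le> what V par lf PX a2 b n f v"
        using what_ge_C1 order_trans ereal_less_eq(3) by metis
    qed
  qed
  then show ?thesis
    using \<open>0 < \<kappa>\<close> by (intro exI[of _ "\<kappa> powr b"]) auto
qed

lemma what_ge_if_C2_or_C3_small:
  assumes small: "\<And>\<epsilon> f. L2_close PX \<epsilon> f d \<Longrightarrow>
                   C2 V par lf PX f v \<le> 6 * \<epsilon> \<or> C3 V par lf PX f v \<le> 6 * \<epsilon>"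
    and close: "L2_close PX (C * real n powr - a1) f d"
    and "1 \<le> real n" "0 \<le> b" "0 < C"
  shows "ereal ((6 * C) powr - b * real n powr (a1 * b)) \<le> what V par lf PX a2 b n f v"
proof -
  have "(6 * C) powr - b * real n powr (a1 * b) = (6 * (C * real n powr - a1)) powr - b"
    using \<open>0 < C\<close> by (simp add: powr_mult powr_powr mult_ac)
  also have "ereal \<dots> \<le> what V par lf PX a2 b n f v"
    using small[OF close] assms(3-5) by (intro what_ge_if_C2_or_C3_le) auto
  finally show ?thesis .
qed

lemma what_lower_outside_Istar:
  fixes lf :: "'n::finite \<Rightarrow> 'v"
  assumes v: "v \<in> V - Istar V par lf PX d" and d: "\<And>j. sq_int PX (d j)"
    and "0 < a1" "0 < b" "0 < C"
  shows "\<exists>c>0. \<forall>\<^sub>F n in sequentially. \<forall>f. L2_close PX (C * real n powr - a1) f d \<longrightarrow>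
           ereal (c * real n powr (min a1 a2 * b)) \<le> what V par lf PX a2 b n f v"
proof -
  have ge1: "\<forall>\<^sub>F n in sequentially. 1 \<le> real n"
    by (rule eventually_sequentiallyI[of 1]) simp
  have "\<exists>c>0. \<exists>e\<ge>min a1 a2. \<forall>\<^sub>F n in sequentially. 1 \<le> real n \<and>
          (\<forall>f. L2_close PX (C * real n powr - a1) f d \<longrightarrow>
             ereal (c * real n powr (e * b)) \<le> what V par lf PX a2 b n f v)"
    using v d
  proof (cases rule: not_Istar_cases)
    case (1 j k)
    from what_ge_if_leaves_differ[OF 1 \<open>0 < a1\<close>, of b C a2] \<open>0 < b\<close>
    obtain c where "0 < c" and ev: "\<forall>\<^sub>F n in sequentially. \<forall>f. L2_close PX (C * real n powr - a1) f d \<longrightarrow>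
        ereal (c * real n powr (a2 * b)) \<le> what V par lf PX a2 b n f v"
      by auto
    show ?thesis
      using eventually_conj[OF ge1 ev] \<open>0 < c\<close> min.cobounded2[of a1 a2] by blast
  next
    case 2
    have "\<forall>\<^sub>F n in sequentially. 1 \<le> real n \<and>
            (\<forall>f. L2_close PX (C * real n powr - a1) f d \<longrightarrow>
               ereal ((6 * C) powr - b * real n powr (a1 * b)) \<le> what V par lf PX a2 b n f v)"
      using ge1
    proof eventually_elim
      case (elim n)
      then show ?case
        using what_ge_if_C2_or_C3_small[OF 2 _ elim less_imp_le[OF \<open>0 < b\<close>] \<open>0 < C\<close>] by blast
    qed
    moreover have "0 < (6 * C) powr - b"
      using \<open>0 < C\<close> by simp
    ultimately show ?thesis
      using min.cobounded1[of a1 a2] by blast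
  qed
  then obtain c e where "0 < c" "min a1 a2 \<le> e"
    and ev: "\<forall>\<^sub>F n in sequentially. 1 \<le> real n \<and>
          (\<forall>f. L2_close PX (C * real n powr - a1) f d \<longrightarrow>
             ereal (c * real n powr (e * b)) \<le> what V par lf PX a2 b n f v)"
    by blast
  have weaken: "c * real n powr (min a1 a2 * b) \<le> c * real n powr (e * b)" if "1 \<le> real n" for n
    using that \<open>0 < c\<close> \<open>0 < b\<close> \<open>min a1 a2 \<le> e\<close>
    by (intro mult_left_mono powr_mono mult_right_mono) auto
  have "\<forall>\<^sub>F n in sequentially. \<forall>f. L2_close PX (C * real n powr - a1) f d \<longrightarrow>
          ereal (c * real n powr (min a1 a2 * b)) \<le> what V par lf PX a2 b n f v"
    using ev
  proof eventually_elim
    case (elim n)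
    then show ?case
      using weaken[of n] by (meson ereal_less_eq(3) order_trans)
  qed
  with \<open>0 < c\<close> show ?thesis
    by blast
qed

lemma Istar_witnesses:
  fixes lf :: "'n::finite \<Rightarrow> 'v"
  assumes "v \<in> Istar V par lf PX d"
  obtains j s where "j \<in> le_set V par lf v" "s \<in> S_set V par lf v"
    "\<And>j k. j \<in> le_set V par lf v \<Longrightarrow> k \<in> le_set V par lf v \<Longrightarrow> L2sq PX (\<lambda>x. d j x - d k x) = 0"
    "0 < L2sq PX (d j)" "0 < L2sq PX (\<lambda>x. d j x - d s x)"
proof -
  let ?L = "le_set V par lf v" and ?S = "S_set V par lf v"
  from assms have agree: "\<And>j k. j \<in> ?L \<Longrightarrow> k \<in> ?L \<Longrightarrow> L2sq PX (\<lambda>x. d j x - d k x) = 0"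
    and nonzero: "\<And>j. j \<in> ?L \<Longrightarrow> L2sq PX (d j) \<noteq> 0"
    and "\<exists>s\<in>?S. \<exists>j\<in>?L. L2sq PX (\<lambda>x. d s x - d j x) \<noteq> 0"
    unfolding Istar_def by simp_all
  then obtain s j where "s \<in> ?S" "j \<in> ?L" "L2sq PX (\<lambda>x. d s x - d j x) \<noteq> 0"
    by blast
  with nonzero agree show thesis
    by (intro that) (auto simp: L2sq_pos_iff L2sq_commute[of PX "d s"])
qed

lemma powr_rate_mult:
  fixes n :: nat and c a1 a2 b :: real
  assumes "0 \<le> c"
  shows "(real n powr a2 * (c * real n powr - a1)) powr b = c powr b * real n powr ((a2 - a1) * b)"
proof -
  have rate: "real n powr a2 * (c * real n powr - a1) = c * real n powr (a2 - a1)"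
    by (simp add: powr_diff powr_minus divide_inverse mult_ac)
  show ?thesis
    unfolding rate using assms by (simp add: powr_mult powr_powr)
qed

lemma what_upper_in_Istar:
  fixes lf :: "'n::finite \<Rightarrow> 'v"
  assumes v: "v \<in> Istar V par lf PX d" and "0 < a1" "0 \<le> b" "0 < C"
  shows "\<exists>K. \<forall>\<^sub>F n in sequentially. \<forall>f. L2_close PX (C * real n powr - a1) f d \<longrightarrow>
           what V par lf PX a2 b n f v \<le> ereal (K * (1 + real n powr ((a2 - a1) * b)))"
proof -
  let ?L = "le_set V par lf v" and ?S = "S_set V par lf v"
  obtain j s where j: "j \<in> ?L" and s: "s \<in> ?S"
    and agree: "\<And>j k. j \<in> ?L \<Longrightarrow> k \<in> ?L \<Longrightarrow> L2sq PX (\<lambda>x. d j x - d k x) = 0"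
    and nonvanishing: "0 < L2sq PX (d j)" and sibling_differs: "0 < L2sq PX (\<lambda>x. d j x - d s x)"
    using Istar_witnesses[OF v] by blast
  define \<gamma>2 where "\<gamma>2 = L2sq PX (d j) / (8 * real (card ?L))"
  define \<gamma>3 where "\<gamma>3 = L2sq PX (\<lambda>x. d j x - d s x) / (8 * real (card ?S) * real (card ?L))"
  have "0 < card ?L" "0 < card ?S"
    using j s by (auto simp: card_gt_0_iff)
  then have "0 < \<gamma>2" "0 < \<gamma>3"
    using nonvanishing sibling_differs unfolding \<gamma>2_def \<gamma>3_def by simp_all
  define K where "K = (6 * C) powr b + \<gamma>2 powr - b + \<gamma>3 powr - b"
  have "0 < L2sq PX (d j) / 12" "0 < L2sq PX (\<lambda>x. d j x - d s x) / 12"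
    using nonvanishing sibling_differs by auto
  from eventually_rate_le[OF \<open>0 < a1\<close> this(1), of C] eventually_rate_le[OF \<open>0 < a1\<close> this(2), of C]
  have "\<forall>\<^sub>F n in sequentially. \<forall>f. L2_close PX (C * real n powr - a1) f d \<longrightarrow>
          what V par lf PX a2 b n f v \<le> ereal (K * (1 + real n powr ((a2 - a1) * b)))"
  proof eventually_elim
    case (elim n)
    show ?case
    proof (intro allI impI)
      fix f
      assume close: "L2_close PX (C * real n powr - a1) f d"
      let ?p = "real n powr ((a2 - a1) * b)"
      have "what V par lf PX a2 b n f v
            \<le> ereal ((real n powr a2 * (6 * C * real n powr - a1)) powr b + \<gamma>2 powr - b + \<gamma>3 powr - b)"
      proof (rule what_le)
        show "C1 V par lf PX f v \<le> 6 * C * real n powr - a1"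
          using C1_le_if_leaves_agree[OF close agree] by (simp add: mult.assoc)
        show "\<gamma>2 \<le> C2 V par lf PX f v"
          unfolding \<gamma>2_def using elim by (intro C2_ge_if_nonvanishing[OF close j]) auto
        show "\<gamma>3 \<le> C3 V par lf PX f v"
          unfolding \<gamma>3_def using elim by (intro C3_ge_if_sibling_differs[OF close j s]) auto
      qed (use \<open>0 < \<gamma>2\<close> \<open>0 < \<gamma>3\<close> \<open>0 \<le> b\<close> in auto)
      also have "(real n powr a2 * (6 * C * real n powr - a1)) powr b = (6 * C) powr b * ?p"
        using \<open>0 < C\<close> by (intro powr_rate_mult) simp
      also have "(6 * C) powr b * ?p + \<gamma>2 powr - b + \<gamma>3 powr - b \<le> K * (1 + ?p)"
        unfolding K_def by (simp add: algebra_simps)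
      finally show "what V par lf PX a2 b n f v \<le> ereal (K * (1 + ?p))"
        by simp
    qed
  qed
  then show ?thesis by blast
qed

lemma prob_tendsto_1_if_L2_close:
  assumes M: "prob_space M"
    and rate: "(\<lambda>n. measure M {\<omega> \<in> space M. \<forall>j. L2sq PX (\<lambda>x. F n \<omega> j x - d j x) \<le> \<epsilon> n}) \<longlonglongrightarrow> 1"
    and F: "\<And>n j \<omega>. \<omega> \<in> space M \<Longrightarrow> sq_int PX (F n \<omega> j)" and d: "\<And>j. sq_int PX (d j)"
    and Q: "\<forall>\<^sub>F n in sequentially. \<forall>f. L2_close PX (\<epsilon> n) f d \<longrightarrow> Q n f"
    and Q_sets: "\<And>n. {\<omega> \<in> space M. Q n (F n \<omega>)} \<in> sets M"
  shows "(\<lambda>n. measure M {\<omega> \<in> space M. Q n (F n \<omega>)}) \<longlonglongrightarrow> 1"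
proof (rule tendsto_sandwich[OF _ _ rate tendsto_const])
  show "\<forall>\<^sub>F n in sequentially.
          measure M {\<omega> \<in> space M. \<forall>j. L2sq PX (\<lambda>x. F n \<omega> j x - d j x) \<le> \<epsilon> n}
            \<le> measure M {\<omega> \<in> space M. Q n (F n \<omega>)}"
    using Q
  proof eventually_elim
    case (elim n)
    then have "{\<omega> \<in> space M. \<forall>j. L2sq PX (\<lambda>x. F n \<omega> j x - d j x) \<le> \<epsilon> n}
                 \<subseteq> {\<omega> \<in> space M. Q n (F n \<omega>)}"
      using F d by (auto simp: L2_close_def)
    then show ?case
      using Q_sets by (intro finite_measure.finite_measure_mono[OF prob_space.axioms(1)[OF M]])
  qed
  show "\<forall>\<^sub>F n in sequentially. measure M {\<omega> \<in> space M. Q n (F n \<omega>)} \<le> 1"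
    using prob_space.prob_le_1[OF M] by simp
qed

theorem mainTheorem3:
  fixes V :: "'v set" and par :: "'v \<Rightarrow> 'v option" and r :: 'v
    and lf :: "'n::finite \<Rightarrow> 'v"
    and PX :: "(real ^ 'n) measure" and m :: "real ^ 'n \<Rightarrow> real"
    and M :: "'w measure"
    and dh :: "nat \<Rightarrow> 'w \<Rightarrow> 'n \<Rightarrow> real ^ 'n \<Rightarrow> real"
    and a1 a2 b C :: real
  assumes tree: "rooted_tree V par r"
    and leaves: "bij_betw lf UNIV (tree_leaves V par)"
    and PX: "prob_space PX" "sets PX = sets borel"
    and diff: "\<And>x. m differentiable (at x)"
    and dm_L2: "\<And>j. sq_int PX (pderiv_j m j)"
    and M: "prob_space M"
    and dh_L2: "\<And>n j \<omega>. \<omega> \<in> space M \<Longrightarrow> sq_int PX (dh n \<omega> j)"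
    and meas1: "\<And>n j k. (\<lambda>\<omega>. L2sq PX (\<lambda>x. dh n \<omega> j x - dh n \<omega> k x)) \<in> borel_measurable M"
    and meas2: "\<And>n j. (\<lambda>\<omega>. L2sq PX (dh n \<omega> j)) \<in> borel_measurable M"
    and meas3: "\<And>n j. (\<lambda>\<omega>. L2sq PX (\<lambda>x. dh n \<omega> j x - pderiv_j m j x)) \<in> borel_measurable M"
    and a1: "a1 > 0" and C: "C > 0"
    and rate: "(\<lambda>n. measure M {\<omega> \<in> space M.
                 (\<forall>j. L2sq PX (\<lambda>x. dh n \<omega> j x - pderiv_j m j x) \<le> C * real n powr (- a1))})
               \<longlonglongrightarrow> 1"
    and a2: "a2 > 0" and b: "b > 0"
  shows
    "(\<forall>v\<in>V - Istar V par lf PX (pderiv_j m).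
        \<exists>c>0. (\<lambda>n. measure M {\<omega> \<in> space M.
                  what V par lf PX a2 b n (dh n \<omega>) v \<ge> ereal (c * real n powr (min a1 a2 * b))})
              \<longlonglongrightarrow> 1)
     \<and> (\<forall>v\<in>Istar V par lf PX (pderiv_j m).
        \<forall>\<epsilon>>0. \<exists>K N. \<forall>n\<ge>N. measure M {\<omega> \<in> space M.
                  what V par lf PX a2 b n (dh n \<omega>) v \<le> ereal (K * (1 + real n powr ((a2 - a1) * b)))}
                \<ge> 1 - \<epsilon>)"
proof -
  have what_meas: "(\<lambda>\<omega>. what V par lf PX a2 b n (dh n \<omega>) v) \<in> borel_measurable M" for n v
    by (rule measurable_what[OF meas1 meas2])
  have prob_tendsto_1: "(\<lambda>n. measure M {\<omega> \<in> space M. Q n (dh n \<omega>)}) \<longlonglongrightarrow> 1"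
    if "\<forall>\<^sub>F n in sequentially. \<forall>f. L2_close PX (C * real n powr - a1) f (pderiv_j m) \<longrightarrow> Q n f"
      and "\<And>n. {\<omega> \<in> space M. Q n (dh n \<omega>)} \<in> sets M" for Q
    by (rule prob_tendsto_1_if_L2_close[OF M rate]) (use dh_L2 dm_L2 that in auto)
  show ?thesis
  proof (intro conjI ballI allI impI)
    fix v
    assume "v \<in> V - Istar V par lf PX (pderiv_j m)"
    from what_lower_outside_Istar[OF this dm_L2 a1 b C, of a2]
    obtain c where "0 < c" and ev: "\<forall>\<^sub>F n in sequentially. \<forall>f.
        L2_close PX (C * real n powr - a1) f (pderiv_j m) \<longrightarrow>
        ereal (c * real n powr (min a1 a2 * b)) \<le> what V par lf PX a2 b n f v"
      by blast
    have "(\<lambda>n. measure M {\<omega> \<in> space M.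
            what V par lf PX a2 b n (dh n \<omega>) v \<ge> ereal (c * real n powr (min a1 a2 * b))}) \<longlonglongrightarrow> 1"
      using what_meas by (intro prob_tendsto_1[OF ev]) measurable
    with \<open>0 < c\<close> show "\<exists>c>0. (\<lambda>n. measure M {\<omega> \<in> space M.
              what V par lf PX a2 b n (dh n \<omega>) v \<ge> ereal (c * real n powr (min a1 a2 * b))}) \<longlonglongrightarrow> 1"
      by blast
  next
    fix v and \<epsilon> :: real
    assume "v \<in> Istar V par lf PX (pderiv_j m)" and "0 < \<epsilon>"
    from what_upper_in_Istar[OF this(1) a1 less_imp_le[OF b] C, of a2]
    obtain K where ev: "\<forall>\<^sub>F n in sequentially. \<forall>f.
        L2_close PX (C * real n powr - a1) f (pderiv_j m) \<longrightarrow>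
        what V par lf PX a2 b n f v \<le> ereal (K * (1 + real n powr ((a2 - a1) * b)))"
      by blast
    have "(\<lambda>n. measure M {\<omega> \<in> space M.
            what V par lf PX a2 b n (dh n \<omega>) v \<le> ereal (K * (1 + real n powr ((a2 - a1) * b)))}) \<longlonglongrightarrow> 1"
      using what_meas by (intro prob_tendsto_1[OF ev]) measurable
    then have "\<forall>\<^sub>F n in sequentially. 1 - \<epsilon> < measure M {\<omega> \<in> space M.
            what V par lf PX a2 b n (dh n \<omega>) v \<le> ereal (K * (1 + real n powr ((a2 - a1) * b)))}"
      using \<open>0 < \<epsilon>\<close> by (intro order_tendstoD(1)) auto
    then show "\<exists>K N. \<forall>n\<ge>N. measure M {\<omega> \<in> space M.
            what V par lf PX a2 b n (dh n \<omega>) v \<le> ereal (K * (1 + real n powr ((a2 - a1) * b)))} \<ge> 1 - \<epsilon>"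
      unfolding eventually_sequentially by (meson less_imp_le)
  qed
qed

end
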